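(* Consider the Markov-chain trace semantics of an APPL program $\langle\mathcal{D},S_{\mathsf{main}}\rangle$, fix $m\in\mathbb{N}$, and let $\phi:\Sigma\to\mathcal{M}_{\mathcal{I}}^{(m)}$ be an expected-potential function. Define $\mathbf{\Phi}_n(\omega)=\phi(\omega_n)$ and $\mathbf{Y}_n(\omega)=\langle[A_n(\omega)^k,A_n(\omega)^k]\rangle_{0\le k\le m}\otimes\mathbf{\Phi}_n(\omega)$, where $A_n(\omega)=\alpha_n$ for $\omega_n=\langle\_,\_,\_,\alpha_n\rangle$. Then for all $n\in\mathbb{Z}_{\ge0}$, $\mathbb{E}[\mathbf{Y}_{n+1}\mid\mathcal{F}_n]\sqsubseteq\mathbf{Y}_n$ almost surely.
   Context: APPL: fix a finite set $\mathsf{VID}$ of real-valued program variables and a finite set $\mathsf{FID}$ of function identifiers. Expressions $E::=x\mid c\mid E_1+E_2\mid E_1*E_2$; conditions $L::=\mathsf{true}\mid\neg L\mid L_1\wedge L_2\mid E_1\le E_2$; each distribution $D$ (e.g. $\mathsf{uniform}(a,b)$, $a<b$) has a probability measure $\mu_D$ on $\mathbb{R}$; statements $S::=\mathsf{skip}\mid\mathsf{tick}(c)\mid x:=E\mid x\sim D\mid\mathsf{call}\ f\mid\mathsf{while}\ L\ \mathsf{do}\ S\mid\mathsf{if}\ \mathsf{prob}(p)\ \mathsf{then}\ S_1\ \mathsf{else}\ S_2\mid\mathsf{if}\ L\ \mathsf{then}\ S_1\ \mathsf{else}\ S_2\mid S_1;S_2$ with $c\in\mathbb{R}$, $p\in[0,1]$.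 A program is $\langle\mathcal{D},S_{\mathsf{main}}\rangle$ with $\mathcal{D}$ a finite map from $\mathsf{FID}$ to statements. Continuations $K::=\mathsf{Kstop}\mid\mathsf{Kloop}(L,S,K)\mid\mathsf{Kseq}(S,K)$. A configuration is $\sigma=\langle\gamma,S,K,\alpha\rangle$ with $\gamma:\mathsf{VID}\to\mathbb{R}$ and cost accumulator $\alpha\in\mathbb{R}$; $\Sigma$ is the measurable space of configurations. One-step evaluation is the probability kernel $\sigma\mapsto{\mapsto}(\sigma)$: $\langle\gamma,\mathsf{skip},\mathsf{Kstop},\alpha\rangle\mapsto\delta(\text{itself})$; $\langle\gamma,\mathsf{skip},\mathsf{Kloop}(L,S,K),\alpha\rangle\mapsto\delta(\langle\gamma,S,\mathsf{Kloop}(L,S,K),\alpha\rangle)$ if $\gamma(L)$ true, else $\delta(\langle\gamma,\mathsf{skip},K,\alpha\rangle)$; $\langle\gamma,\mathsf{skip},\mathsf{Kseq}(S,K),\alpha\rangle\mapsto\delta(\langle\gamma,S,K,\alpha\rangle)$; $\langle\gamma,\mathsf{tick}(c),K,\alpha\rangle\mapsto\delta(\langle\gamma,\mathsf{skip},K,\alpha+c\rangle)$; $\langle\gamma,x:=E,K,\alpha\rangle\mapsto\delta(\langle\gamma[x\mapsto\gamma(E)],\mathsf{skip},K,\alpha\rangle)$; $\langle\gamma,x\sim D,K,\alpha\rangle\mapsto$ law of $\langle\gamma[x\mapsto r],\mathsf{skip},K,\alpha\rangle$ with $r\sim\mu_D$; $\langle\gamma,\mathsf{call}\ f,K,\alpha\rangle\mapsto\delta(\langle\gamma,\mathcal{D}(f),K,\alpha\rangle)$;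 probabilistic branch $\mapsto p\,\delta(\langle\gamma,S_1,K,\alpha\rangle)+(1-p)\,\delta(\langle\gamma,S_2,K,\alpha\rangle)$; conditional $\mapsto\delta(\langle\gamma,S_1,K,\alpha\rangle)$ or $\delta(\langle\gamma,S_2,K,\alpha\rangle)$ according to $\gamma(L)$; $\langle\gamma,\mathsf{while}\ L\ \mathsf{do}\ S,K,\alpha\rangle\mapsto\delta(\langle\gamma,\mathsf{skip},\mathsf{Kloop}(L,S,K),\alpha\rangle)$; $\langle\gamma,S_1;S_2,K,\alpha\rangle\mapsto\delta(\langle\gamma,S_1,\mathsf{Kseq}(S_2,K),\alpha\rangle)$. Trace semantics: $\Omega=\Sigma^{\mathbb{Z}_{\ge0}}$ with product $\sigma$-algebra, coordinate filtration $\mathcal{F}_n=\sigma(\omega_0,\dots,\omega_n)$, and $\mathbb{P}$ the law of the Markov chain started at $\langle\lambda\_.0,S_{\mathsf{main}},\mathsf{Kstop},0\rangle$ with kernel $\mapsto$. Interval semiring $\mathcal{I}$: intervals $[a,b]$ ($a\le b$) with $[a,b]+_{\mathcal{I}}[c,d]=[a+c,b+d]$, $[a,b]\cdot_{\mathcal{I}}[c,d]=[\min S,\max S]$, $S=\{ac,ad,bc,bd\}$, ordered by inclusion. $\mathcal{M}_{\mathcal{I}}^{(m)}$: vectors $\langle u_k\rangle_{0\le k\le m}$ of intervals with pointwise $\oplus$, product $\langle u_k\rangle\otimes\langle v_k\rangle=\langle\sum_{i=0}^k\binom{k}{i}\times(u_i\cdot_{\mathcal{I}}v_{k-i})\rangle_{0\le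 k\le m}$, unit $\underline{1}=\langle[1,1],[0,0],\dots,[0,0]\rangle$, and order $\sqsubseteq$ = pointwise inclusion. Expectations of such vectors are taken componentwise on endpoints. An expected-potential function is a measurable $\phi:\Sigma\to\mathcal{M}_{\mathcal{I}}^{(m)}$ with (i) $\phi(\sigma)=\underline{1}$ if $\sigma=\langle\_,\mathsf{skip},\mathsf{Kstop},\_\rangle$, and (ii) for all $\sigma=\langle\_,\_,\_,\alpha\rangle\in\Sigma$, $\phi(\sigma)\sqsupseteq\mathbb{E}_{\sigma'\sim{\mapsto}(\sigma)}\big[\langle[(\alpha'-\alpha)^k,(\alpha'-\alpha)^k]\rangle_{0\le k\le m}\otimes\phi(\sigma')\big]$ where $\sigma'=\langle\_,\_,\_,\alpha'\rangle$. *)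

theory Defs
  imports "HOL-Probability.Probability"
begin

text \<open>'v = VID (program variables), 'f = FID (function identifiers),
  'd = syntax of distributions (interpreted by a map mu :: 'd => real measure).\<close>

datatype 'v expr = EVar 'v | EConst real | EPlus "'v expr" "'v expr" | ETimes "'v expr" "'v expr"

datatype 'v cond = LTrue | LNot "'v cond" | LAnd "'v cond" "'v cond" | LLe "'v expr" "'v expr"

datatype ('v, 'f, 'd) stmt =
    SSkip
  | STick real
  | SAssign 'v "'v expr"
  | SSample 'v 'd
  | SCall 'f
  | SWhile "'v cond" "('v, 'f, 'd) stmt"
  | SProbIf real "('v, 'f, 'd) stmt" "('v, 'f, 'd) stmt"
  | SIf "'v cond" "('v, 'f, 'd) stmt" "('v, 'f, 'd) stmt"
  | SSeq "('v, 'f, 'd) stmt" "('v, 'f, 'd) stmt"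

datatype ('v, 'f, 'd) cont =
    Kstop
  | Kloop "'v cond" "('v, 'f, 'd) stmt" "('v, 'f, 'd) cont"
  | Kseq "('v, 'f, 'd) stmt" "('v, 'f, 'd) cont"

fun wf_stmt :: "('v, 'f, 'd) stmt \<Rightarrow> bool" where
  "wf_stmt (SWhile L S) = wf_stmt S"
| "wf_stmt (SProbIf p S1 S2) = (0 \<le> p \<and> p \<le> 1 \<and> wf_stmt S1 \<and> wf_stmt S2)"
| "wf_stmt (SIf L S1 S2) = (wf_stmt S1 \<and> wf_stmt S2)"
| "wf_stmt (SSeq S1 S2) = (wf_stmt S1 \<and> wf_stmt S2)"
| "wf_stmt _ = True"

fun eval_expr :: "('v \<Rightarrow> real) \<Rightarrow> 'v expr \<Rightarrow> real" where
  "eval_expr \<gamma> (EVar x) = \<gamma> x"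
| "eval_expr \<gamma> (EConst c) = c"
| "eval_expr \<gamma> (EPlus e1 e2) = eval_expr \<gamma> e1 + eval_expr \<gamma> e2"
| "eval_expr \<gamma> (ETimes e1 e2) = eval_expr \<gamma> e1 * eval_expr \<gamma> e2"

fun eval_cond :: "('v \<Rightarrow> real) \<Rightarrow> 'v cond \<Rightarrow> bool" where
  "eval_cond \<gamma> LTrue = True"
| "eval_cond \<gamma> (LNot L) = (\<not> eval_cond \<gamma> L)"
| "eval_cond \<gamma> (LAnd L1 L2) = (eval_cond \<gamma> L1 \<and> eval_cond \<gamma> L2)"
| "eval_cond \<gamma> (LLe e1 e2) = (eval_expr \<gamma> e1 \<le> eval_expr \<gamma> e2)"

type_synonym ('v, 'f, 'd) config = "('v \<Rightarrow> real) \<times> ('v, 'f, 'd) stmt \<times> ('v, 'f, 'd) cont \<times> real"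

definition acc :: "('v, 'f, 'd) config \<Rightarrow> real" where
  "acc \<sigma> = snd (snd (snd \<sigma>))"

text \<open>Sigma is the disjoint union, over the syntactic part (S,K), of copies of
  R^VID x R with their Borel sigma-algebras: a set of configurations is measurable
  iff each of its (S,K)-slices is Borel.\<close>
definition configM :: "('v, 'f, 'd) config measure" where
  "configM = sigma UNIV
     {A. \<forall>S K. (\<lambda>(\<gamma>, \<alpha>). (\<gamma>, S, K, \<alpha>)) -` A
            \<in> sets ((Pi\<^sub>M UNIV (\<lambda>_::'v. (borel :: real measure))) \<Otimes>\<^sub>M (borel :: real measure))}"

fun step :: "('f \<Rightarrow> ('v, 'f, 'd) stmt) \<Rightarrow> ('d \<Rightarrow> real measure)
             \<Rightarrow> ('v, 'f, 'd) config \<Rightarrow> ('v, 'f, 'd) config measure" where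
  "step D mu (\<gamma>, SSkip, Kstop, \<alpha>) = return configM (\<gamma>, SSkip, Kstop, \<alpha>)"
| "step D mu (\<gamma>, SSkip, Kloop L S K, \<alpha>) =
     (if eval_cond \<gamma> L then return configM (\<gamma>, S, Kloop L S K, \<alpha>)
      else return configM (\<gamma>, SSkip, K, \<alpha>))"
| "step D mu (\<gamma>, SSkip, Kseq S K, \<alpha>) = return configM (\<gamma>, S, K, \<alpha>)"
| "step D mu (\<gamma>, STick c, K, \<alpha>) = return configM (\<gamma>, SSkip, K, \<alpha> + c)"
| "step D mu (\<gamma>, SAssign x E, K, \<alpha>) = return configM (\<gamma>(x := eval_expr \<gamma> E), SSkip, K, \<alpha>)"
| "step D mu (\<gamma>, SSample x d, K, \<alpha>) = distr (mu d) configM (\<lambda>r. (\<gamma>(x := r), SSkip, K, \<alpha>))"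
| "step D mu (\<gamma>, SCall f, K, \<alpha>) = return configM (\<gamma>, D f, K, \<alpha>)"
| "step D mu (\<gamma>, SProbIf p S1 S2, K, \<alpha>) =
     distr (measure_pmf (bernoulli_pmf p)) configM
       (\<lambda>b. if b then (\<gamma>, S1, K, \<alpha>) else (\<gamma>, S2, K, \<alpha>))"
| "step D mu (\<gamma>, SIf L S1 S2, K, \<alpha>) =
     (if eval_cond \<gamma> L then return configM (\<gamma>, S1, K, \<alpha>) else return configM (\<gamma>, S2, K, \<alpha>))"
| "step D mu (\<gamma>, SWhile L S, K, \<alpha>) = return configM (\<gamma>, SSkip, Kloop L S K, \<alpha>)"
| "step D mu (\<gamma>, SSeq S1 S2, K, \<alpha>) = return configM (\<gamma>, S1, Kseq S2 K, \<alpha>)"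

definition traceM :: "(nat \<Rightarrow> ('v, 'f, 'd) config) measure" where
  "traceM = Pi\<^sub>M UNIV (\<lambda>_. configM)"

definition filt :: "nat \<Rightarrow> (nat \<Rightarrow> ('v, 'f, 'd) config) measure" where
  "filt n = sigma (space traceM)
     {{\<omega> \<in> space traceM. \<omega> i \<in> A} | i A. i \<le> n \<and> A \<in> sets configM}"

definition init_config :: "('v, 'f, 'd) stmt \<Rightarrow> ('v, 'f, 'd) config" where
  "init_config S = (\<lambda>_. 0, S, Kstop, 0)"

text \<open>P is the law of the Markov chain with kernel step started at
  <lambda _. 0, S_main, Kstop, 0>: omega_0 is the initial configuration a.s., and the
  conditional law of omega_(n+1) given F_n is step(omega_n).\<close>
definition is_trace_law ::
  "('f \<Rightarrow> ('v, 'f, 'd) stmt) \<Rightarrow> ('d \<Rightarrow> real measure) \<Rightarrow> ('v, 'f, 'd) stmt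
   \<Rightarrow> (nat \<Rightarrow> ('v, 'f, 'd) config) measure \<Rightarrow> bool" where
  "is_trace_law D mu Smain P \<longleftrightarrow>
     sets P = sets traceM \<and> prob_space P \<and>
     (AE \<omega> in P. \<omega> 0 = init_config Smain) \<and>
     (\<forall>n. \<forall>A \<in> sets configM. \<forall>B \<in> sets (filt n).
        emeasure P (B \<inter> {\<omega> \<in> space traceM. \<omega> (Suc n) \<in> A})
          = (\<integral>\<^sup>+ \<omega>. indicator B \<omega> * emeasure (step D mu (\<omega> n)) A \<partial>P))"

text \<open>An interval [a,b] is the pair (a,b); a vector <u_k>_(0<=k<=m) is a function
  nat => real x real of which only the indices k <= m are relevant.\<close>
type_synonym ivec = "nat \<Rightarrow> real \<times> real"

definition imul :: "real \<times> real \<Rightarrow> real \<times> real \<Rightarrow> real \<times> real" where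
  "imul u v = (let S = {fst u * fst v, fst u * snd v, snd u * fst v, snd u * snd v}
               in (Min S, Max S))"

definition otimes :: "ivec \<Rightarrow> ivec \<Rightarrow> ivec" where
  "otimes u v = (\<lambda>k. ((\<Sum>i\<le>k. real (k choose i) * fst (imul (u i) (v (k - i)))),
                       (\<Sum>i\<le>k. real (k choose i) * snd (imul (u i) (v (k - i))))))"

definition ione :: ivec where
  "ione = (\<lambda>k. if k = 0 then (1, 1) else (0, 0))"

definition pw :: "real \<Rightarrow> ivec" where
  "pw a = (\<lambda>k. (a ^ k, a ^ k))"

definition ivec_le :: "nat \<Rightarrow> ivec \<Rightarrow> ivec \<Rightarrow> bool" where
  "ivec_le m u v \<longleftrightarrow> (\<forall>k\<le>m. fst (v k) \<le> fst (u k) \<and> snd (u k) \<le> snd (v k))"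

definition expected_potential ::
  "('f \<Rightarrow> ('v, 'f, 'd) stmt) \<Rightarrow> ('d \<Rightarrow> real measure) \<Rightarrow> nat
   \<Rightarrow> (('v, 'f, 'd) config \<Rightarrow> ivec) \<Rightarrow> bool" where
  "expected_potential D mu m \<phi> \<longleftrightarrow>
     \<comment> \<open>measurable, with values in M_I^(m) (genuine intervals)\<close>
     (\<forall>k\<le>m. (\<lambda>\<sigma>. fst (\<phi> \<sigma> k)) \<in> borel_measurable configM
            \<and> (\<lambda>\<sigma>. snd (\<phi> \<sigma> k)) \<in> borel_measurable configM) \<and>
     (\<forall>\<sigma>. \<forall>k\<le>m. fst (\<phi> \<sigma> k) \<le> snd (\<phi> \<sigma> k)) \<and>
     \<comment> \<open>(i)\<close>
     (\<forall>\<gamma> \<alpha>. \<forall>k\<le>m. \<phi> (\<gamma>, SSkip, Kstop, \<alpha>) k = ione k) \<and>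
     \<comment> \<open>(ii), expectations taken componentwise on endpoints (and required to exist)\<close>
     (\<forall>\<sigma>. \<forall>k\<le>m.
        integrable (step D mu \<sigma>) (\<lambda>\<sigma>'. fst (otimes (pw (acc \<sigma>' - acc \<sigma>)) (\<phi> \<sigma>') k)) \<and>
        integrable (step D mu \<sigma>) (\<lambda>\<sigma>'. snd (otimes (pw (acc \<sigma>' - acc \<sigma>)) (\<phi> \<sigma>') k)) \<and>
        fst (\<phi> \<sigma> k) \<le> (\<integral>\<sigma>'. fst (otimes (pw (acc \<sigma>' - acc \<sigma>)) (\<phi> \<sigma>') k) \<partial>step D mu \<sigma>) \<and>
        (\<integral>\<sigma>'. snd (otimes (pw (acc \<sigma>' - acc \<sigma>)) (\<phi> \<sigma>') k) \<partial>step D mu \<sigma>) \<le> snd (\<phi> \<sigma> k))"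

definition Ytrace :: "(('v, 'f, 'd) config \<Rightarrow> ivec) \<Rightarrow> nat \<Rightarrow> (nat \<Rightarrow> ('v, 'f, 'd) config) \<Rightarrow> ivec" where
  "Ytrace \<phi> n \<omega> = otimes (pw (acc (\<omega> n))) (\<phi> (\<omega> n))"

end

theory Submission
  imports Defs
begin

(* Write a for the accumulated cost of the current configuration and c = a' - a for the
   cost increment of a step.  Expanding (a + c)^j binomially inside the convolution gives

     pw (a + c) \<otimes> w  \<sqsubseteq>  pw a \<otimes> (pw c \<otimes> w)

   for every interval vector w; this is only an inclusion because interval multiplication
   is merely subdistributive when one interval is scaled by numbers of different signs.
   Integration against the step kernel commutes with multiplication by the point vector pw a,
   and pw a \<otimes> _ is monotone for inclusion, so the expected-potential inequality
   \<phi> \<sigma> \<sqsupseteq> E[pw c \<otimes> \<phi> \<sigma>'] yields E[Y (n+1) | \<omega> n = \<sigma>] \<sqsubseteq> Y n; the cost increment need not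
   be deterministic.  The Markov property of the trace law identifies the conditional
   expectation given F n with integration against the step kernel at \<omega> n. *)

section \<open>Interval moment vectors\<close>

definition ivec_proper :: "nat \<Rightarrow> ivec \<Rightarrow> bool" where
  "ivec_proper m V \<longleftrightarrow> (\<forall>k\<le>m. fst (V k) \<le> snd (V k))"

definition ivec_neg :: "ivec \<Rightarrow> ivec" where
  "ivec_neg V = (\<lambda>k. (- snd (V k), - fst (V k)))"

lemma ivec_le_trans: "ivec_le m U V \<Longrightarrow> ivec_le m V W \<Longrightarrow> ivec_le m U W"
  by (fastforce simp: ivec_le_def)

lemma imul_point: "imul (x, x) v = (min (x * fst v) (x * snd v), max (x * fst v) (x * snd v))"
  by (simp add: imul_def Let_def insert_commute)

lemma fst_otimes_pw:
  "fst (otimes (pw a) V k) = (\<Sum>i\<le>k. real (k choose i) * min (a^i * fst (V (k-i))) (a^i * snd (V (k-i))))"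
  by (simp add: otimes_def pw_def imul_point)

lemma snd_otimes_pw:
  "snd (otimes (pw a) V k) = (\<Sum>i\<le>k. real (k choose i) * max (a^i * fst (V (k-i))) (a^i * snd (V (k-i))))"
  by (simp add: otimes_def pw_def imul_point)

lemma ivec_proper_otimes_pw: "ivec_proper m (otimes (pw a) V)"
  by (auto simp: ivec_proper_def fst_otimes_pw snd_otimes_pw intro!: sum_mono mult_left_mono)

lemma otimes_pw_neg: "otimes (pw a) (ivec_neg V) = ivec_neg (otimes (pw a) V)"
  by (intro ext prod_eqI) (simp_all add: fst_otimes_pw snd_otimes_pw ivec_neg_def sum_negf
      min.commute max.commute flip: minus_max_eq_min minus_min_eq_max)

lemma min_max_mult_mono:
  fixes x l h l' h' :: real
  assumes "l' \<le> l" "l \<le> h" "h \<le> h'"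
  shows "min (x * l') (x * h') \<le> min (x * l) (x * h)"
    and "max (x * l) (x * h) \<le> max (x * l') (x * h')"
proof -
  have "x * l' \<le> x * l \<and> x * l \<le> x * h \<and> x * h \<le> x * h'
      \<or> x * h' \<le> x * h \<and> x * h \<le> x * l \<and> x * l \<le> x * l'"
    using assms by (cases "0 \<le> x") (auto intro: mult_left_mono mult_left_mono_neg)
  then show "min (x * l') (x * h') \<le> min (x * l) (x * h)"
    and "max (x * l) (x * h) \<le> max (x * l') (x * h')"
    by linarith+
qed

lemma ivec_le_otimes_pw_mono:
  assumes "ivec_le m V W" and "ivec_proper m V"
  shows "ivec_le m (otimes (pw a) V) (otimes (pw a) W)"
  using assms unfolding ivec_le_def ivec_proper_def fst_otimes_pw snd_otimes_pw
  by (auto intro!: sum_mono mult_left_mono min_max_mult_mono)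

lemma min_mult_sum_min_max:
  fixes x :: real and w p q :: "nat \<Rightarrow> real"
  assumes "\<And>t. t \<in> T \<Longrightarrow> 0 \<le> w t"
  shows "min (x * (\<Sum>t\<in>T. w t * min (p t) (q t))) (x * (\<Sum>t\<in>T. w t * max (p t) (q t)))
       = (\<Sum>t\<in>T. w t * min (x * p t) (x * q t))"
proof -
  have le: "(\<Sum>t\<in>T. w t * min (p t) (q t)) \<le> (\<Sum>t\<in>T. w t * max (p t) (q t))"
    using assms by (intro sum_mono mult_left_mono) auto
  show ?thesis
  proof (cases "0 \<le> x")
    case True
    then have "min (x * (\<Sum>t\<in>T. w t * min (p t) (q t))) (x * (\<Sum>t\<in>T. w t * max (p t) (q t)))
        = (\<Sum>t\<in>T. w t * (x * min (p t) (q t)))"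
      using mult_left_mono[OF le True] by (simp add: min_absorb1 sum_distrib_left ac_simps)
    then show ?thesis using True by (simp add: min_mult_distrib_left)
  next
    case False
    then have "min (x * (\<Sum>t\<in>T. w t * min (p t) (q t))) (x * (\<Sum>t\<in>T. w t * max (p t) (q t)))
        = (\<Sum>t\<in>T. w t * (x * max (p t) (q t)))"
      using mult_left_mono_neg[OF le, of x] by (simp add: min_absorb2 sum_distrib_left ac_simps)
    then show ?thesis using False by (simp add: max_mult_distrib_left)
  qed
qed

lemma sum_min_mult_le_min_sum_mult:
  fixes L H :: real and w u :: "nat \<Rightarrow> real"
  assumes "\<And>i. i \<in> I \<Longrightarrow> 0 \<le> w i"
  shows "(\<Sum>i\<in>I. w i * min (u i * L) (u i * H))
       \<le> min ((\<Sum>i\<in>I. w i * u i) * L) ((\<Sum>i\<in>I. w i * u i) * H)"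
proof -
  have "(\<Sum>i\<in>I. w i * min (u i * L) (u i * H)) \<le> (\<Sum>i\<in>I. w i * (u i * L))"
    and "(\<Sum>i\<in>I. w i * min (u i * L) (u i * H)) \<le> (\<Sum>i\<in>I. w i * (u i * H))"
    using assms by (auto intro!: sum_mono mult_left_mono)
  then show ?thesis by (simp add: sum_distrib_right mult.assoc)
qed

lemma binomial_convolution_swap:
  fixes G :: "nat \<Rightarrow> nat \<Rightarrow> real"
  shows "(\<Sum>i\<le>k. real (k choose i) * (\<Sum>t\<le>k-i. real ((k-i) choose t) * G i t))
       = (\<Sum>j\<le>k. real (k choose j) * (\<Sum>i\<le>j. real (j choose i) * G i (j-i)))"
proof -
  have "(\<Sum>i\<le>k. real (k choose i) * (\<Sum>t\<le>k-i. real ((k-i) choose t) * G i t))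
      = (\<Sum>(i,t)\<in>Sigma {..k} (\<lambda>i. {..k-i}). real (k choose i) * real ((k-i) choose t) * G i t)"
    by (simp add: sum.Sigma sum_distrib_left ac_simps)
  also have "Sigma {..k} (\<lambda>i. {..k-i}) = {(i,t). i+t \<le> k}" by auto
  also have "(\<Sum>(i,t)\<in>{(i,t). i+t \<le> k}. real (k choose i) * real ((k-i) choose t) * G i t)
      = (\<Sum>j\<le>k. \<Sum>i\<le>j. real (k choose i) * real ((k-i) choose (j-i)) * G i (j-i))"
    by (rule sum.triangle_reindex_eq)
  also have "\<dots> = (\<Sum>j\<le>k. \<Sum>i\<le>j. real (k choose j) * (real (j choose i) * G i (j-i)))"
  proof (intro sum.cong refl)
    fix j i assume "j \<in> {..k}" "i \<in> {..j}"
    then have "real (k choose j) * real (j choose i) = real (k choose i) * real ((k - i) choose (j - i))"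
      by (simp flip: of_nat_mult add: choose_mult)
    then show "real (k choose i) * real ((k-i) choose (j-i)) * G i (j-i)
        = real (k choose j) * (real (j choose i) * G i (j-i))"
      by (metis mult.assoc)
  qed
  finally show ?thesis by (simp add: sum_distrib_left)
qed

lemma fst_otimes_pw_add_ge:
  "fst (otimes (pw a) (otimes (pw c) W) k) \<le> fst (otimes (pw (a + c)) W k)"
proof -
  define L where "L j = fst (W j)" for j
  define H where "H j = snd (W j)" for j
  define G where "G i t = min (a^i * (c^t * L (k-i-t))) (a^i * (c^t * H (k-i-t)))" for i t
  have "fst (otimes (pw a) (otimes (pw c) W) k)
      = (\<Sum>i\<le>k. real (k choose i) * (\<Sum>t\<le>k-i. real ((k-i) choose t) * G i t))"
    unfolding fst_otimes_pw snd_otimes_pw G_def L_def H_def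
    by (subst min_mult_sum_min_max) simp_all
  also have "\<dots> = (\<Sum>j\<le>k. real (k choose j) * (\<Sum>i\<le>j. real (j choose i) * G i (j-i)))"
    by (rule binomial_convolution_swap)
  also have "\<dots> \<le> (\<Sum>j\<le>k. real (k choose j) * min ((a+c)^j * L (k-j)) ((a+c)^j * H (k-j)))"
  proof (intro sum_mono mult_left_mono)
    fix j assume j: "j \<in> {..k}"
    have "(\<Sum>i\<le>j. real (j choose i) * G i (j-i))
        = (\<Sum>i\<le>j. real (j choose i) * min ((a^i * c^(j-i)) * L (k-j)) ((a^i * c^(j-i)) * H (k-j)))"
      using j by (intro sum.cong refl) (simp add: G_def ac_simps)
    also have "\<dots> \<le> min ((\<Sum>i\<le>j. real (j choose i) * (a^i * c^(j-i))) * L (k-j))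
                        ((\<Sum>i\<le>j. real (j choose i) * (a^i * c^(j-i))) * H (k-j))"
      by (rule sum_min_mult_le_min_sum_mult) simp
    also have "(\<Sum>i\<le>j. real (j choose i) * (a^i * c^(j-i))) = (a+c)^j"
      by (simp add: binomial_ring ac_simps)
    finally show "(\<Sum>i\<le>j. real (j choose i) * G i (j-i)) \<le> min ((a+c)^j * L (k-j)) ((a+c)^j * H (k-j))" .
  qed simp
  also have "\<dots> = fst (otimes (pw (a + c)) W k)"
    by (simp add: fst_otimes_pw L_def H_def)
  finally show ?thesis .
qed

lemma ivec_le_otimes_pw_add: "ivec_le m (otimes (pw (a + c)) W) (otimes (pw a) (otimes (pw c) W))"
proof -
  have "- snd (otimes (pw a) (otimes (pw c) W) k) \<le> - snd (otimes (pw (a + c)) W k)" for k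
    using fst_otimes_pw_add_ge[of a c "ivec_neg W" k] unfolding otimes_pw_neg
    by (simp add: ivec_neg_def)
  then show ?thesis
    using fst_otimes_pw_add_ge by (auto simp: ivec_le_def)
qed

section \<open>Integration of interval vectors\<close>

definition ivec_measurable :: "nat \<Rightarrow> 'a measure \<Rightarrow> ('a \<Rightarrow> ivec) \<Rightarrow> bool" where
  "ivec_measurable m M X \<longleftrightarrow>
     (\<forall>k\<le>m. (\<lambda>x. fst (X x k)) \<in> borel_measurable M \<and> (\<lambda>x. snd (X x k)) \<in> borel_measurable M)"

definition ivec_integrable :: "nat \<Rightarrow> 'a measure \<Rightarrow> ('a \<Rightarrow> ivec) \<Rightarrow> bool" where
  "ivec_integrable m M X \<longleftrightarrow>
     (\<forall>k\<le>m. integrable M (\<lambda>x. fst (X x k)) \<and> integrable M (\<lambda>x. snd (X x k)))"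

definition ivec_integral :: "'a measure \<Rightarrow> ('a \<Rightarrow> ivec) \<Rightarrow> ivec" where
  "ivec_integral M X = (\<lambda>k. (\<integral>x. fst (X x k) \<partial>M, \<integral>x. snd (X x k) \<partial>M))"

lemma ivec_measurable_otimes_pw:
  assumes X: "ivec_measurable m M X" and A: "A \<in> borel_measurable M"
  shows "ivec_measurable m M (\<lambda>x. otimes (pw (A x)) (X x))"
  unfolding ivec_measurable_def fst_otimes_pw snd_otimes_pw
proof (intro allI impI conjI borel_measurable_sum)
  fix k i assume "k \<le> m" "i \<in> {..k}"
  then have "(\<lambda>x. fst (X x (k - i))) \<in> borel_measurable M"
    "(\<lambda>x. snd (X x (k - i))) \<in> borel_measurable M"
    using X by (auto simp: ivec_measurable_def)
  show "(\<lambda>x. real (k choose i) * min (A x ^ i * fst (X x (k - i))) (A x ^ i * snd (X x (k - i))))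
      \<in> borel_measurable M"
    by (intro borel_measurable_times borel_measurable_min borel_measurable_power
        borel_measurable_const) fact+
  show "(\<lambda>x. real (k choose i) * max (A x ^ i * fst (X x (k - i))) (A x ^ i * snd (X x (k - i))))
      \<in> borel_measurable M"
    by (intro borel_measurable_times borel_measurable_max borel_measurable_power
        borel_measurable_const) fact+
qed

lemma ivec_integrable_otimes_pw:
  assumes "ivec_integrable m M X"
  shows "ivec_integrable m M (\<lambda>x. otimes (pw a) (X x))"
  using assms unfolding ivec_integrable_def fst_otimes_pw snd_otimes_pw
  by (auto intro!: integrable_sum integrable_mult_right integrable_min integrable_max)

lemma ivec_proper_integral:
  assumes "ivec_integrable m M X" and "\<And>x. ivec_proper m (X x)"
  shows "ivec_proper m (ivec_integral M X)"
  using assms by (auto simp: ivec_proper_def ivec_integrable_def ivec_integral_def intro!: integral_mono)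

lemma integral_min_max_mult:
  fixes l h :: "'a \<Rightarrow> real"
  assumes "integrable M l" "integrable M h" "\<And>x. l x \<le> h x"
  shows "(\<integral>x. min (y * l x) (y * h x) \<partial>M) = min (y * (\<integral>x. l x \<partial>M)) (y * (\<integral>x. h x \<partial>M))"
    and "(\<integral>x. max (y * l x) (y * h x) \<partial>M) = max (y * (\<integral>x. l x \<partial>M)) (y * (\<integral>x. h x \<partial>M))"
proof -
  have lh: "(\<integral>x. l x \<partial>M) \<le> (\<integral>x. h x \<partial>M)" using assms by (intro integral_mono) auto
  have "(\<integral>x. min (y * l x) (y * h x) \<partial>M) = min (y * (\<integral>x. l x \<partial>M)) (y * (\<integral>x. h x \<partial>M))
      \<and> (\<integral>x. max (y * l x) (y * h x) \<partial>M) = max (y * (\<integral>x. l x \<partial>M)) (y * (\<integral>x. h x \<partial>M))"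
  proof (cases "0 \<le> y")
    case True
    then have "\<And>x. y * l x \<le> y * h x" and "y * (\<integral>x. l x \<partial>M) \<le> y * (\<integral>x. h x \<partial>M)"
      using assms(3) lh by (auto intro: mult_left_mono)
    then show ?thesis by (simp add: min_absorb1 max_absorb2)
  next
    case False
    then have "\<And>x. y * h x \<le> y * l x" and "y * (\<integral>x. h x \<partial>M) \<le> y * (\<integral>x. l x \<partial>M)"
      using assms(3) lh by (auto intro: mult_left_mono_neg)
    then show ?thesis by (simp add: min_absorb2 max_absorb1)
  qed
  then show "(\<integral>x. min (y * l x) (y * h x) \<partial>M) = min (y * (\<integral>x. l x \<partial>M)) (y * (\<integral>x. h x \<partial>M))"
    and "(\<integral>x. max (y * l x) (y * h x) \<partial>M) = max (y * (\<integral>x. l x \<partial>M)) (y * (\<integral>x. h x \<partial>M))"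
    by auto
qed

lemma ivec_integral_otimes_pw:
  assumes X: "ivec_integrable m M X" "\<And>x. ivec_proper m (X x)" and "k \<le> m"
  shows "ivec_integral M (\<lambda>x. otimes (pw a) (X x)) k = otimes (pw a) (ivec_integral M X) k"
proof -
  have int: "integrable M (\<lambda>x. fst (X x (k - i)))" "integrable M (\<lambda>x. snd (X x (k - i)))"
    and le: "\<And>x. fst (X x (k - i)) \<le> snd (X x (k - i))" for i
    using X \<open>k \<le> m\<close> by (auto simp: ivec_integrable_def ivec_proper_def)
  show ?thesis
    by (rule prod_eqI)
      (simp_all add: ivec_integral_def fst_otimes_pw snd_otimes_pw integral_min_max_mult[OF int le]
        integrable_min integrable_max int)
qed

lemma ivec_le_integral:
  assumes X: "ivec_measurable m M X" "\<And>x. ivec_proper m (X x)"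
    and XY: "\<And>x. ivec_le m (X x) (Y x)" and Y: "ivec_integrable m M Y"
  shows "ivec_integrable m M X" and "ivec_le m (ivec_integral M X) (ivec_integral M Y)"
proof -
  have bounds: "fst (Y x k) \<le> fst (X x k) \<and> fst (X x k) \<le> snd (X x k) \<and> snd (X x k) \<le> snd (Y x k)"
    if "k \<le> m" for k x
    using X(2) XY that by (auto simp: ivec_le_def ivec_proper_def)
  have "integrable M (\<lambda>x. fst (X x k)) \<and> integrable M (\<lambda>x. snd (X x k))" if "k \<le> m" for k
  proof -
    have dom: "integrable M (\<lambda>x. \<bar>fst (Y x k)\<bar> + \<bar>snd (Y x k)\<bar>)"
      using Y that by (auto simp: ivec_integrable_def)
    have "\<bar>fst (X x k)\<bar> \<le> \<bar>fst (Y x k)\<bar> + \<bar>snd (Y x k)\<bar>"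
      and "\<bar>snd (X x k)\<bar> \<le> \<bar>fst (Y x k)\<bar> + \<bar>snd (Y x k)\<bar>" for x
      using bounds[OF that, of x] by linarith+
    then show ?thesis
      using X(1) that by (auto simp: ivec_measurable_def intro!: Bochner_Integration.integrable_bound[OF dom])
  qed
  then show "ivec_integrable m M X" by (simp add: ivec_integrable_def)
  then show "ivec_le m (ivec_integral M X) (ivec_integral M Y)"
    using Y bounds by (auto simp: ivec_le_def ivec_integral_def ivec_integrable_def intro!: integral_mono)
qed

lemma ivec_le_integral_otimes_pw_shift:
  fixes A :: "'a \<Rightarrow> real" and \<psi> :: "'a \<Rightarrow> ivec"
  assumes meas: "ivec_measurable m M \<psi>" "A \<in> borel_measurable M"
    and int: "ivec_integrable m M (\<lambda>x. otimes (pw (A x - a)) (\<psi> x))"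
    and le: "ivec_le m (ivec_integral M (\<lambda>x. otimes (pw (A x - a)) (\<psi> x))) V"
  shows "ivec_integrable m M (\<lambda>x. otimes (pw (A x)) (\<psi> x))"
    and "ivec_le m (ivec_integral M (\<lambda>x. otimes (pw (A x)) (\<psi> x))) (otimes (pw a) V)"
proof -
  define X where "X x = otimes (pw (A x - a)) (\<psi> x)" for x
  have incl: "ivec_le m (otimes (pw (A x)) (\<psi> x)) (otimes (pw a) (X x))" for x
    using ivec_le_otimes_pw_add[of m a "A x - a" "\<psi> x"] by (simp add: X_def)
  have X_int: "ivec_integrable m M X" and X_proper: "\<And>x. ivec_proper m (X x)"
    using int by (simp_all add: X_def[abs_def] ivec_proper_otimes_pw)
  note sandwich = ivec_le_integral[OF ivec_measurable_otimes_pw[OF meas] ivec_proper_otimes_pw incl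
      ivec_integrable_otimes_pw[OF X_int]]
  show "ivec_integrable m M (\<lambda>x. otimes (pw (A x)) (\<psi> x))"
    by (rule sandwich(1))
  have "ivec_le m (ivec_integral M (\<lambda>x. otimes (pw a) (X x))) (otimes (pw a) (ivec_integral M X))"
    by (simp add: ivec_le_def ivec_integral_otimes_pw[OF X_int X_proper])
  moreover have "ivec_le m (otimes (pw a) (ivec_integral M X)) (otimes (pw a) V)"
    using le by (intro ivec_le_otimes_pw_mono ivec_proper_integral[OF X_int X_proper]) (simp add: X_def[abs_def])
  ultimately show "ivec_le m (ivec_integral M (\<lambda>x. otimes (pw (A x)) (\<psi> x))) (otimes (pw a) V)"
    using sandwich(2) by (blast intro: ivec_le_trans)
qed

section \<open>Measurability of configurations and of the step kernel\<close>

abbreviation slice_borel :: "(('v \<Rightarrow> real) \<times> real) measure" where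
  "slice_borel \<equiv> Pi\<^sub>M UNIV (\<lambda>_::'v. borel) \<Otimes>\<^sub>M borel"

lemma space_configM [simp]: "space configM = UNIV"
  by (simp add: configM_def)

lemma measurable_config_slice: "(\<lambda>(\<gamma>, \<alpha>). (\<gamma>, S, K, \<alpha>)) \<in> measurable slice_borel configM"
  unfolding configM_def by (rule measurable_measure_of) (auto simp: space_pair_measure)

lemma measurable_configI:
  fixes F :: "('v, 'f, 'd) config \<Rightarrow> 'a"
  assumes slices: "\<And>S K. (\<lambda>(\<gamma>, \<alpha>). F (\<gamma>, S, K, \<alpha>)) \<in> measurable slice_borel N"
  shows "F \<in> measurable configM N"
proof (rule measurableI)
  fix \<sigma> :: "('v, 'f, 'd) config"
  obtain \<gamma> S K \<alpha> where "\<sigma> = (\<gamma>, S, K, \<alpha>)" by (cases \<sigma>) auto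
  then show "F \<sigma> \<in> space N"
    using measurable_space[OF slices[of S K], of "(\<gamma>, \<alpha>)"] by (simp add: space_pair_measure space_PiM)
next
  fix A assume A: "A \<in> sets N"
  have "(\<lambda>(\<gamma>, \<alpha>). (\<gamma>, S, K, \<alpha>)) -` F -` A \<in> sets slice_borel" for S K
    using measurable_sets[OF slices A] by (simp add: space_pair_measure space_PiM vimage_def case_prod_beta)
  then show "F -` A \<inter> space configM \<in> sets configM"
    by (simp add: configM_def)
qed

lemma measurable_config_tuple [measurable (raw)]:
  assumes "g \<in> measurable M (Pi\<^sub>M UNIV (\<lambda>_::'v. borel))" and "a \<in> borel_measurable M"
  shows "(\<lambda>x. (g x, S, K, a x)) \<in> measurable M (configM :: ('v, 'f, 'd) config measure)"
  using measurable_comp[OF measurable_Pair[OF assms] measurable_config_slice[where S=S and K=K]]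
  by (simp add: comp_def)

lemma measurable_fun_upd_borel [measurable (raw)]:
  assumes "g \<in> measurable M (Pi\<^sub>M UNIV (\<lambda>_::'v. borel))" and "r \<in> borel_measurable M"
  shows "(\<lambda>x. (g x)(v := r x)) \<in> measurable M (Pi\<^sub>M UNIV (\<lambda>_::'v. borel))"
  by (rule measurable_fun_upd[where J=UNIV]) (use assms in auto)

lemma borel_measurable_acc [measurable]: "acc \<in> borel_measurable configM"
  by (rule measurable_configI) (simp add: acc_def case_prod_beta)

lemma borel_measurable_eval_expr [measurable]:
  "(\<lambda>\<gamma>. eval_expr \<gamma> E) \<in> borel_measurable (Pi\<^sub>M UNIV (\<lambda>_::'v. borel))"
  by (induction E) auto

lemma measurable_eval_cond [measurable]:
  "Measurable.pred (Pi\<^sub>M UNIV (\<lambda>_::'v. borel)) (\<lambda>\<gamma>. eval_cond \<gamma> L)"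
proof (induction L)
  case (LLe e1 e2)
  show ?case
    using borel_measurable_le[OF borel_measurable_eval_expr borel_measurable_eval_expr, of e1 e2]
    by (simp add: Measurable.pred_def)
qed auto

lemma measurable_sample_update:
  assumes "sets M = sets (borel :: real measure)"
  shows "(\<lambda>r. (\<gamma>(x := r), SSkip, K, \<alpha>)) \<in> measurable M configM"
proof -
  have "(\<lambda>r. \<gamma>(x := r)) \<in> measurable borel (Pi\<^sub>M UNIV (\<lambda>_. borel))"
    by (rule measurable_fun_upd_borel) (auto simp: space_PiM)
  then show ?thesis
    unfolding measurable_cong_sets[OF assms refl] by (rule measurable_config_tuple) simp
qed

lemma sets_step [simp, measurable_cong]:
  assumes "\<forall>d. sets (mu d) = sets borel"
  shows "sets (step D mu \<sigma>) = sets configM"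
  by (induction D mu \<sigma> rule: step.induct) (use assms in auto)

lemma prob_space_step:
  assumes "\<forall>d. prob_space (mu d) \<and> sets (mu d) = sets borel"
  shows "prob_space (step D mu \<sigma>)"
  using assms
  by (induction D mu \<sigma> rule: step.induct)
    (auto intro: prob_space_return prob_space.prob_space_distr prob_space_measure_pmf
      measurable_sample_update)

lemma nn_integral_bernoulli_pmf:
  "(\<integral>\<^sup>+ b. f b \<partial>measure_pmf (bernoulli_pmf p))
     = ennreal (pmf (bernoulli_pmf p) True) * f True + ennreal (pmf (bernoulli_pmf p) False) * f False"
  by (simp add: nn_integral_measure_pmf nn_integral_count_space_finite UNIV_bool)

lemma borel_measurable_nn_integral_step:
  assumes h[measurable]: "h \<in> borel_measurable configM"
    and mu: "\<forall>d. prob_space (mu d) \<and> sets (mu d) = sets borel"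
  shows "(\<lambda>\<sigma>. \<integral>\<^sup>+ \<sigma>'. h \<sigma>' \<partial>step D mu \<sigma>) \<in> borel_measurable configM"
proof (rule measurable_configI)
  fix S K
  show "(\<lambda>(\<gamma>, \<alpha>). \<integral>\<^sup>+ \<sigma>'. h \<sigma>' \<partial>step D mu (\<gamma>, S, K, \<alpha>)) \<in> borel_measurable slice_borel"
  proof (cases S)
    case SSkip
    then show ?thesis
      by (cases K) (simp_all add: nn_integral_return case_prod_beta if_distrib[of "\<lambda>M. \<integral>\<^sup>+ x. h x \<partial>M"])
  next
    case (SSample x d)
    have sd: "sets (mu d) = sets borel" and "prob_space (mu d)" using mu by auto
    then interpret prob_space "mu d" by simp
    have "(\<lambda>(p, r). h ((fst p)(x := r), SSkip, K, snd p)) \<in> borel_measurable (slice_borel \<Otimes>\<^sub>M mu d)"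
      unfolding measurable_cong_sets[OF sets_pair_measure_cong[OF refl sd] refl] by measurable
    then have "(\<lambda>p. \<integral>\<^sup>+ r. h ((fst p)(x := r), SSkip, K, snd p) \<partial>mu d) \<in> borel_measurable slice_borel"
      by (rule borel_measurable_nn_integral[THEN measurable_cong[THEN iffD1, rotated]]) simp
    then show ?thesis
      using SSample by (simp add: case_prod_beta nn_integral_distr measurable_sample_update[OF sd])
  next
    case (SProbIf p S1 S2)
    then show ?thesis
      by (simp add: case_prod_beta nn_integral_distr nn_integral_bernoulli_pmf)
  next
    case (SIf L S1 S2)
    then show ?thesis
      by (simp add: nn_integral_return case_prod_beta if_distrib[of "\<lambda>M. \<integral>\<^sup>+ x. h x \<partial>M"])
  qed (simp_all add: nn_integral_return case_prod_beta)
qed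

lemma measurable_step:
  fixes D :: "'f \<Rightarrow> ('v, 'f, 'd) stmt"
  assumes "\<forall>d. prob_space (mu d) \<and> sets (mu d) = sets borel"
  shows "step D mu \<in> measurable configM (subprob_algebra configM)"
proof (rule measurable_subprob_algebra)
  fix A :: "('v, 'f, 'd) config set"
  assume "A \<in> sets configM"
  then show "(\<lambda>\<sigma>. emeasure (step D mu \<sigma>) A) \<in> borel_measurable configM"
    using borel_measurable_nn_integral_step[of "indicator A", OF _ assms] assms
    by (simp add: nn_integral_indicator)
qed (use assms in \<open>auto intro: prob_space_imp_subprob_space prob_space_step\<close>)

section \<open>Conditional expectations along traces\<close>

lemma space_traceM [simp]: "space traceM = UNIV"
  by (simp add: traceM_def space_PiM)

lemma measurable_trace_coord [measurable]: "(\<lambda>\<omega>. \<omega> i) \<in> measurable traceM configM"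
  unfolding traceM_def by (rule measurable_component_singleton) simp

lemma space_filt [simp]: "space (filt n) = UNIV"
  by (simp add: filt_def)

lemma sets_filt: "sets (filt n) = sigma_sets UNIV {{\<omega>. \<omega> i \<in> A} | i A. i \<le> n \<and> A \<in> sets configM}"
  unfolding filt_def by (subst sets_measure_of) auto

lemma sets_filt_subset: "sets (filt n) \<subseteq> sets traceM"
proof -
  have "{\<omega>. \<omega> i \<in> A} \<in> sets traceM" if "A \<in> sets configM" for i A
    using measurable_sets[OF measurable_trace_coord that, of i] by (simp add: vimage_def)
  then have "sigma_sets (space traceM) {{\<omega>. \<omega> i \<in> A} | i A. i \<le> n \<and> A \<in> sets configM}
      \<subseteq> sets traceM"
    by (intro sets.sigma_sets_subset) auto
  then show ?thesis by (simp add: sets_filt)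
qed

lemma measurable_filt_coord: "i \<le> n \<Longrightarrow> (\<lambda>\<omega>. \<omega> i) \<in> measurable (filt n) configM"
  by (rule measurableI) (auto simp: sets_filt vimage_def)

locale trace_law =
  fixes D :: "'f \<Rightarrow> ('v, 'f, 'd) stmt" and mu :: "'d \<Rightarrow> real measure"
    and Smain :: "('v, 'f, 'd) stmt" and P :: "(nat \<Rightarrow> ('v, 'f, 'd) config) measure"
  assumes mu: "\<forall>d. prob_space (mu d) \<and> sets (mu d) = sets borel"
    and law: "is_trace_law D mu Smain P"
begin

lemma sets_P [measurable_cong]: "sets P = sets traceM"
  using law by (simp add: is_trace_law_def)

lemma space_P [simp]: "space P = UNIV"
  using sets_eq_imp_space_eq[OF sets_P] by simp

lemma measurable_coord [measurable]: "(\<lambda>\<omega>. \<omega> i) \<in> measurable P configM"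
  unfolding measurable_cong_sets[OF sets_P refl] by simp

lemma sets_filt_subset_P: "B \<in> sets (filt n) \<Longrightarrow> B \<in> sets P"
  using sets_filt_subset sets_P by auto

lemma sigma_finite_subalgebra_filt: "sigma_finite_subalgebra P (filt n)"
proof -
  interpret prob_space P using law by (simp add: is_trace_law_def)
  have sub: "subalgebra P (filt n)"
    using sets_filt_subset_P by (auto simp: subalgebra_def)
  interpret finite_measure "restr_to_subalg P (filt n)"
    by (rule finite_measure_restr_to_subalg[OF sub]) unfold_locales
  show ?thesis
    unfolding sigma_finite_subalgebra_def using sub sigma_finite_measure_axioms by blast
qed

lemma measurable_step_coord:
  assumes "sets M = sets P"
  shows "(\<lambda>\<omega>. step D mu (\<omega> n)) \<in> measurable M (subprob_algebra configM)"
  using measurable_comp[OF measurable_coord measurable_step[OF mu]]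
  unfolding measurable_cong_sets[OF assms refl] by (simp add: comp_def)

lemma distr_successor_eq_bind:
  assumes B: "B \<in> sets (filt n)"
  defines "Q \<equiv> density P (indicator B)"
  shows "distr Q configM (\<lambda>\<omega>. \<omega> (Suc n)) = Q \<bind> (\<lambda>\<omega>. step D mu (\<omega> n))"
proof (rule measure_eqI)
  have [measurable]: "B \<in> sets P" using sets_filt_subset_P[OF B] .
  have K: "(\<lambda>\<omega>. step D mu (\<omega> n)) \<in> measurable Q (subprob_algebra configM)"
    by (rule measurable_step_coord) (simp add: Q_def)
  show "sets (distr Q configM (\<lambda>\<omega>. \<omega> (Suc n))) = sets (Q \<bind> (\<lambda>\<omega>. step D mu (\<omega> n)))"
    using mu by (simp add: Q_def)
  fix A assume "A \<in> sets (distr Q configM (\<lambda>\<omega>. \<omega> (Suc n)))"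
  then have A[measurable]: "A \<in> sets configM" by simp
  have succ_A: "{\<omega>. \<omega> (Suc n) \<in> A} \<in> sets P"
    using measurable_sets[OF measurable_coord A] by (simp add: vimage_def)
  have "emeasure (distr Q configM (\<lambda>\<omega>. \<omega> (Suc n))) A
      = emeasure Q {\<omega>. \<omega> (Suc n) \<in> A}"
    by (simp add: emeasure_distr Q_def vimage_def)
  also have "\<dots> = (\<integral>\<^sup>+ \<omega>. indicator B \<omega> * indicator {\<omega>. \<omega> (Suc n) \<in> A} \<omega> \<partial>P)"
    unfolding Q_def by (rule emeasure_density[OF _ succ_A]) simp
  also have "\<dots> = (\<integral>\<^sup>+ \<omega>. indicator (B \<inter> {\<omega> \<in> space traceM. \<omega> (Suc n) \<in> A}) \<omega> \<partial>P)"
    by (intro nn_integral_cong) (simp add: indicator_inter_arith)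
  also have "\<dots> = emeasure P (B \<inter> {\<omega> \<in> space traceM. \<omega> (Suc n) \<in> A})"
    by (rule nn_integral_indicator) measurable
  also have "\<dots> = (\<integral>\<^sup>+ \<omega>. indicator B \<omega> * emeasure (step D mu (\<omega> n)) A \<partial>P)"
    using law B A by (simp add: is_trace_law_def)
  also have "\<dots> = emeasure (Q \<bind> (\<lambda>\<omega>. step D mu (\<omega> n))) A"
  proof -
    have "(\<lambda>\<omega>. emeasure (step D mu (\<omega> n)) A) \<in> borel_measurable P"
      using measurable_emeasure_subprob_algebra[OF A] measurable_step_coord[of P n]
      by (simp add: measurable_comp[where f="\<lambda>\<omega>. step D mu (\<omega> n)", unfolded comp_def])
    then have "(\<integral>\<^sup>+ \<omega>. indicator B \<omega> * emeasure (step D mu (\<omega> n)) A \<partial>P)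
        = (\<integral>\<^sup>+ \<omega>. emeasure (step D mu (\<omega> n)) A \<partial>Q)"
      unfolding Q_def by (subst nn_integral_density) simp_all
    also have "\<dots> = emeasure (Q \<bind> (\<lambda>\<omega>. step D mu (\<omega> n))) A"
      by (rule emeasure_bind[symmetric, OF _ K A]) (simp add: Q_def)
    finally show ?thesis .
  qed
  finally show "emeasure (distr Q configM (\<lambda>\<omega>. \<omega> (Suc n))) A
      = emeasure (Q \<bind> (\<lambda>\<omega>. step D mu (\<omega> n))) A" .
qed

lemma borel_measurable_nn_integral_step_coord:
  assumes "h \<in> borel_measurable configM"
  shows "(\<lambda>\<omega>. \<integral>\<^sup>+ \<sigma>'. h \<sigma>' \<partial>step D mu (\<omega> n)) \<in> borel_measurable (filt n)"
  using measurable_comp[OF measurable_filt_coord[OF order_refl] borel_measurable_nn_integral_step[OF assms mu]]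
  by (simp add: comp_def)

lemma set_nn_integral_successor:
  assumes B: "B \<in> sets (filt n)" and h[measurable]: "h \<in> borel_measurable configM"
  shows "(\<integral>\<^sup>+ \<omega> \<in> B. h (\<omega> (Suc n)) \<partial>P) = (\<integral>\<^sup>+ \<omega> \<in> B. (\<integral>\<^sup>+ \<sigma>'. h \<sigma>' \<partial>step D mu (\<omega> n)) \<partial>P)"
proof -
  define Q where "Q = density P (indicator B)"
  have [measurable]: "B \<in> sets P" using sets_filt_subset_P[OF B] .
  have sets_Q: "sets Q = sets P" by (simp add: Q_def)
  have succ_Q: "(\<lambda>\<omega>. \<omega> (Suc n)) \<in> measurable Q configM"
    using measurable_coord unfolding measurable_cong_sets[OF sets_Q refl] .
  have [measurable]: "(\<lambda>\<omega>. \<integral>\<^sup>+ \<sigma>'. h \<sigma>' \<partial>step D mu (\<omega> n)) \<in> borel_measurable P"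
    using measurable_comp[OF measurable_coord borel_measurable_nn_integral_step[OF h mu]]
    by (simp add: comp_def)
  have "(\<integral>\<^sup>+ \<omega> \<in> B. h (\<omega> (Suc n)) \<partial>P) = (\<integral>\<^sup>+ \<omega>. h (\<omega> (Suc n)) \<partial>Q)"
    unfolding Q_def by (subst nn_integral_density) (simp_all add: mult.commute)
  also have "\<dots> = (\<integral>\<^sup>+ \<sigma>. h \<sigma> \<partial>distr Q configM (\<lambda>\<omega>. \<omega> (Suc n)))"
    by (rule nn_integral_distr[symmetric, OF succ_Q]) simp
  also have "\<dots> = (\<integral>\<^sup>+ \<sigma>. h \<sigma> \<partial>(Q \<bind> (\<lambda>\<omega>. step D mu (\<omega> n))))"
    unfolding Q_def distr_successor_eq_bind[OF B] ..
  also have "\<dots> = (\<integral>\<^sup>+ \<omega>. (\<integral>\<^sup>+ \<sigma>'. h \<sigma>' \<partial>step D mu (\<omega> n)) \<partial>Q)"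
    by (rule nn_integral_bind[OF h measurable_step_coord[OF sets_Q]])
  also have "\<dots> = (\<integral>\<^sup>+ \<omega> \<in> B. (\<integral>\<^sup>+ \<sigma>'. h \<sigma>' \<partial>step D mu (\<omega> n)) \<partial>P)"
    unfolding Q_def by (subst nn_integral_density) (simp_all add: mult.commute)
  finally show ?thesis .
qed

lemma nn_cond_exp_successor:
  assumes h: "h \<in> borel_measurable configM"
  shows "AE \<omega> in P. (\<integral>\<^sup>+ \<sigma>'. h \<sigma>' \<partial>step D mu (\<omega> n))
                    = nn_cond_exp P (filt n) (\<lambda>\<omega>. h (\<omega> (Suc n))) \<omega>"
proof -
  interpret sigma_finite_subalgebra P "filt n" by (rule sigma_finite_subalgebra_filt)
  show ?thesis
  proof (rule nn_cond_exp_charact)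
    show "(\<lambda>\<omega>. h (\<omega> (Suc n))) \<in> borel_measurable P"
      using measurable_comp[OF measurable_coord h] by (simp add: comp_def)
  qed (use set_nn_integral_successor[OF _ h] borel_measurable_nn_integral_step_coord[OF h] in auto)
qed

(* real_cond_exp is assembled from the nonnegative conditional expectations of the positive
   and negative parts, so no integrability with respect to P is needed. *)
lemma real_cond_exp_successor:
  assumes h: "h \<in> borel_measurable configM"
    and int: "\<And>\<sigma>. integrable (step D mu \<sigma>) h"
  shows "AE \<omega> in P. real_cond_exp P (filt n) (\<lambda>\<omega>. h (\<omega> (Suc n))) \<omega>
                    = (\<integral>\<sigma>'. h \<sigma>' \<partial>step D mu (\<omega> n))"
proof -
  have "(\<lambda>\<sigma>. ennreal (h \<sigma>)) \<in> borel_measurable configM" "(\<lambda>\<sigma>. ennreal (- h \<sigma>)) \<in> borel_measurable configM"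
    by (intro measurable_compose[OF _ measurable_ennreal] borel_measurable_uminus h)+
  from this[THEN nn_cond_exp_successor[where n=n]] show ?thesis
  proof eventually_elim
    case (elim \<omega>)
    then show ?case
      unfolding real_cond_exp_def using real_lebesgue_integral_def[OF int[of "\<omega> n"]] by simp
  qed
qed

lemma real_cond_exp_successor_ivec:
  assumes meas: "ivec_measurable m configM Y" and int: "\<And>\<sigma>. ivec_integrable m (step D mu \<sigma>) Y"
  shows "AE \<omega> in P. \<forall>k\<le>m.
           real_cond_exp P (filt n) (\<lambda>\<omega>. fst (Y (\<omega> (Suc n)) k)) \<omega> = fst (ivec_integral (step D mu (\<omega> n)) Y k)
         \<and> real_cond_exp P (filt n) (\<lambda>\<omega>. snd (Y (\<omega> (Suc n)) k)) \<omega> = snd (ivec_integral (step D mu (\<omega> n)) Y k)"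
proof -
  have "AE \<omega> in P. k \<le> m \<longrightarrow>
           real_cond_exp P (filt n) (\<lambda>\<omega>. fst (Y (\<omega> (Suc n)) k)) \<omega> = fst (ivec_integral (step D mu (\<omega> n)) Y k)
         \<and> real_cond_exp P (filt n) (\<lambda>\<omega>. snd (Y (\<omega> (Suc n)) k)) \<omega> = snd (ivec_integral (step D mu (\<omega> n)) Y k)"
    for k
  proof (cases "k \<le> m")
    case True
    have "AE \<omega> in P. real_cond_exp P (filt n) (\<lambda>\<omega>. fst (Y (\<omega> (Suc n)) k)) \<omega>
        = (\<integral>\<sigma>'. fst (Y \<sigma>' k) \<partial>step D mu (\<omega> n))"
      and "AE \<omega> in P. real_cond_exp P (filt n) (\<lambda>\<omega>. snd (Y (\<omega> (Suc n)) k)) \<omega>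
        = (\<integral>\<sigma>'. snd (Y \<sigma>' k) \<partial>step D mu (\<omega> n))"
      using meas int True
      by (auto intro!: real_cond_exp_successor simp: ivec_measurable_def ivec_integrable_def)
    then show ?thesis
      by eventually_elim (simp add: ivec_integral_def)
  qed simp
  then show ?thesis by (simp add: AE_all_countable)
qed

end

lemma expected_potentialD:
  assumes "expected_potential D mu m \<phi>"
  shows "ivec_measurable m configM \<phi>"
    and "ivec_integrable m (step D mu \<sigma>) (\<lambda>\<sigma>'. otimes (pw (acc \<sigma>' - acc \<sigma>)) (\<phi> \<sigma>'))"
    and "ivec_le m (ivec_integral (step D mu \<sigma>) (\<lambda>\<sigma>'. otimes (pw (acc \<sigma>' - acc \<sigma>)) (\<phi> \<sigma>'))) (\<phi> \<sigma>)"
proof -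
  have "\<forall>k\<le>m.
        integrable (step D mu \<sigma>) (\<lambda>\<sigma>'. fst (otimes (pw (acc \<sigma>' - acc \<sigma>)) (\<phi> \<sigma>') k)) \<and>
        integrable (step D mu \<sigma>) (\<lambda>\<sigma>'. snd (otimes (pw (acc \<sigma>' - acc \<sigma>)) (\<phi> \<sigma>') k)) \<and>
        fst (\<phi> \<sigma> k) \<le> (\<integral>\<sigma>'. fst (otimes (pw (acc \<sigma>' - acc \<sigma>)) (\<phi> \<sigma>') k) \<partial>step D mu \<sigma>) \<and>
        (\<integral>\<sigma>'. snd (otimes (pw (acc \<sigma>' - acc \<sigma>)) (\<phi> \<sigma>') k) \<partial>step D mu \<sigma>) \<le> snd (\<phi> \<sigma> k)"
    using assms unfolding expected_potential_def by blast
  then show "ivec_integrable m (step D mu \<sigma>) (\<lambda>\<sigma>'. otimes (pw (acc \<sigma>' - acc \<sigma>)) (\<phi> \<sigma>'))"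
    and "ivec_le m (ivec_integral (step D mu \<sigma>) (\<lambda>\<sigma>'. otimes (pw (acc \<sigma>' - acc \<sigma>)) (\<phi> \<sigma>'))) (\<phi> \<sigma>)"
    by (simp_all add: ivec_integrable_def ivec_le_def ivec_integral_def)
  show "ivec_measurable m configM \<phi>"
    using assms by (simp add: expected_potential_def ivec_measurable_def)
qed

lemma expected_potential_step:
  assumes pot: "expected_potential D mu m \<phi>" and mu: "\<forall>d. sets (mu d) = sets borel"
  shows "ivec_integrable m (step D mu \<sigma>) (\<lambda>\<sigma>'. otimes (pw (acc \<sigma>')) (\<phi> \<sigma>'))"
    and "ivec_le m (ivec_integral (step D mu \<sigma>) (\<lambda>\<sigma>'. otimes (pw (acc \<sigma>')) (\<phi> \<sigma>')))
                   (otimes (pw (acc \<sigma>)) (\<phi> \<sigma>))"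
proof -
  have "ivec_measurable m (step D mu \<sigma>) \<phi>" and "acc \<in> borel_measurable (step D mu \<sigma>)"
    using expected_potentialD(1)[OF pot] mu
    by (simp_all add: ivec_measurable_def measurable_cong_sets[OF sets_step refl])
  from ivec_le_integral_otimes_pw_shift[OF this expected_potentialD(2,3)[OF pot]]
  show "ivec_integrable m (step D mu \<sigma>) (\<lambda>\<sigma>'. otimes (pw (acc \<sigma>')) (\<phi> \<sigma>'))"
    and "ivec_le m (ivec_integral (step D mu \<sigma>) (\<lambda>\<sigma>'. otimes (pw (acc \<sigma>')) (\<phi> \<sigma>')))
                   (otimes (pw (acc \<sigma>)) (\<phi> \<sigma>))" .
qed

theorem lemma4p2:
  fixes D :: "'f::finite \<Rightarrow> ('v::finite, 'f, 'd) stmt"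
    and Smain :: "('v, 'f, 'd) stmt"
    and mu :: "'d \<Rightarrow> real measure"
    and P :: "(nat \<Rightarrow> ('v, 'f, 'd) config) measure"
    and m :: nat
    and \<phi> :: "('v, 'f, 'd) config \<Rightarrow> ivec"
  assumes dists: "\<forall>d. prob_space (mu d) \<and> sets (mu d) = sets borel"
    and wf_main: "wf_stmt Smain"
    and wf_D: "\<forall>f. wf_stmt (D f)"
    and law: "is_trace_law D mu Smain P"
    and pot: "expected_potential D mu m \<phi>"
  shows "\<forall>n. AE \<omega> in P.
           ivec_le m
             (\<lambda>k. (real_cond_exp P (filt n) (\<lambda>\<omega>'. fst (Ytrace \<phi> (Suc n) \<omega>' k)) \<omega>,
                    real_cond_exp P (filt n) (\<lambda>\<omega>'. snd (Ytrace \<phi> (Suc n) \<omega>' k)) \<omega>))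
             (Ytrace \<phi> n \<omega>)"
proof
  fix n
  interpret trace_law D mu Smain P using dists law by unfold_locales
  define Y where "Y \<sigma> = otimes (pw (acc \<sigma>)) (\<phi> \<sigma>)" for \<sigma>
  have Y_meas: "ivec_measurable m configM Y"
    unfolding Y_def by (rule ivec_measurable_otimes_pw[OF expected_potentialD(1)[OF pot] borel_measurable_acc])
  have "\<forall>d. sets (mu d) = sets borel" using dists by simp
  note drift = expected_potential_step[OF pot this]
  from real_cond_exp_successor_ivec[OF Y_meas drift(1)[folded Y_def], where n=n]
  show "AE \<omega> in P. ivec_le m
             (\<lambda>k. (real_cond_exp P (filt n) (\<lambda>\<omega>'. fst (Ytrace \<phi> (Suc n) \<omega>' k)) \<omega>,
                    real_cond_exp P (filt n) (\<lambda>\<omega>'. snd (Ytrace \<phi> (Suc n) \<omega>' k)) \<omega>))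
             (Ytrace \<phi> n \<omega>)"
  proof eventually_elim
    case (elim \<omega>)
    with drift(2)[of "\<omega> n", folded Y_def] show ?case
      by (simp add: ivec_le_def Ytrace_def Y_def)
  qed
qed

end
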